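(* Let $\mathcal{M}$ be a set of mappings, $q$ a conjunctive query, and let $(q(\vec v),\Pi)=\mathrm{unf}(q,\mathcal{M})$ be its unfolding. Let $r_1,r_2\in\Pi$. If $\mathrm{head}(r_1)$ and $\mathrm{head}(r_2)$ are not unifiable, then for every database instance $\mathcal{D}$ of $\Sigma$, $(q(\vec v),\{r_1\})^{\mathcal{D}}\cap(q(\vec v),\{r_2\})^{\mathcal{D}}=\emptyset$.
   Context: A mapping is $L(\vec f(\vec x))\leftsquigarrow V(\vec x)$ with $L$ a concept or role name, $\vec f(\vec x)$ a tuple of terms each of the form $g(\vec y)$ with $g$ a function symbol and $\vec y\subseteq\vec x$ (no constants), and $V$ a view name whose extension on a database instance $\mathcal{D}$ of the schema $\Sigma$ is given by a query over $\Sigma$. Unfolding: for a CQ $q(\vec x)\leftarrow L_1(\vec v_1),\dots,L_n(\vec v_n)$ (without constants), $\mathrm{unf}(q,\mathcal{M})$ is the non-recursive Datalog query $(q_{\mathrm{unf}}(\vec x),\Pi)$ where $\Pi$ is a minimal (up to variable renaming) set of rules such that for every tuple $(m_1,\dots,m_n)$ of mappings in $\mathcal{M}$ with $m_i=L_i(\vec f_i(\vec x_i))\leftsquigarrow V_i(\vec z_i)$ and every most general unifier $\sigma$ of $\{(L_i(\vec v_i),L_i(\vec f_i(\vec x_i)))\mid1\le i\le n\}$, the rule $q_{\mathrm{unf}}(\sigma(\vec x))\leftarrow V_1(\sigma(\vec z_1)),\dots,V_n(\sigma(\vec z_n))$ is in $\Pi$. The evaluation of a Datalog query with function symbols over $\mathcal{D}$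 returns tuples of terms $f(\vec a)$ with $\vec a$ database values. $\mathrm{head}(r)$ denotes the head atom of rule $r$. *)

theory Defs
  imports Main
begin

text \<open>Terms: variables or function symbols applied to argument lists.
  Ground answer terms use type ('f,'c) trm, where a database value a is Var a.\<close>
datatype ('f, 'v) trm = Var 'v | Fn 'f "('f, 'v) trm list"

primrec subst :: "('v \<Rightarrow> ('f, 'w) trm) \<Rightarrow> ('f, 'v) trm \<Rightarrow> ('f, 'w) trm" where
  "subst \<sigma> (Var x) = \<sigma> x"
| "subst \<sigma> (Fn g ts) = Fn g (map (subst \<sigma>) ts)"

text \<open>Conjunctive query q(ans) <- L_1(v_1),...,L_n(v_n) without constants.\<close>
record ('l, 'v) cq =
  cq_ans  :: "'v list"
  cq_body :: "('l \<times> 'v list) list"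

text \<open>Mapping L(g_1(y_1),...,g_k(y_k)) ~> V(z).\<close>
record ('l, 'f, 'u, 'w) mapping =
  map_pred :: 'l
  map_terms :: "('f \<times> 'u list) list"
  map_view :: 'w
  map_vars :: "'u list"

definition wf_mapping :: "('l, 'f, 'u, 'w) mapping \<Rightarrow> bool" where
  "wf_mapping m \<longleftrightarrow> (\<forall>(g, ys) \<in> set (map_terms m). set ys \<subseteq> set (map_vars m))"

text \<open>Datalog rule with fixed head predicate q_unf: head arguments and body view atoms.\<close>
record ('f, 'x, 'w) rule =
  rhead :: "('f, 'x) trm list"
  rbody :: "('w \<times> ('f, 'x) trm list) list"

type_synonym ('f, 'v, 'u, 'w) unf_rule = "('f, 'v + nat \<times> 'u, 'w) rule"

text \<open>Variables of the unfolded rules: CQ variables Inl v; the variables of the i-th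
  mapping of the tuple are renamed apart as Inr (i, u).\<close>
definition is_unifier ::
  "('l, 'v) cq \<Rightarrow> ('l, 'f, 'u, 'w) mapping list
   \<Rightarrow> ('v + nat \<times> 'u \<Rightarrow> ('f, 'v + nat \<times> 'u) trm) \<Rightarrow> bool" where
  "is_unifier q ms \<sigma> \<longleftrightarrow>
     length ms = length (cq_body q) \<and>
     (\<forall>i < length ms.
        fst (cq_body q ! i) = map_pred (ms ! i) \<and>
        length (snd (cq_body q ! i)) = length (map_terms (ms ! i)) \<and>
        (\<forall>j < length (map_terms (ms ! i)).
           \<sigma> (Inl (snd (cq_body q ! i) ! j)) =
           subst \<sigma> (Fn (fst (map_terms (ms ! i) ! j))
                         (map (\<lambda>y. Var (Inr (i, y))) (snd (map_terms (ms ! i) ! j))))))"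

definition is_mgu ::
  "('l, 'v) cq \<Rightarrow> ('l, 'f, 'u, 'w) mapping list
   \<Rightarrow> ('v + nat \<times> 'u \<Rightarrow> ('f, 'v + nat \<times> 'u) trm) \<Rightarrow> bool" where
  "is_mgu q ms \<sigma> \<longleftrightarrow> is_unifier q ms \<sigma> \<and>
     (\<forall>\<tau>. is_unifier q ms \<tau> \<longrightarrow> (\<exists>\<rho>. \<forall>x. \<tau> x = subst \<rho> (\<sigma> x)))"

definition gen_rule ::
  "('l, 'v) cq \<Rightarrow> ('l, 'f, 'u, 'w) mapping list
   \<Rightarrow> ('v + nat \<times> 'u \<Rightarrow> ('f, 'v + nat \<times> 'u) trm) \<Rightarrow> ('f, 'v, 'u, 'w) unf_rule" where
  "gen_rule q ms \<sigma> =
     \<lparr> rhead = map (\<lambda>x. \<sigma> (Inl x)) (cq_ans q),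
       rbody = map (\<lambda>i. (map_view (ms ! i), map (\<lambda>z. \<sigma> (Inr (i, z))) (map_vars (ms ! i))))
                   [0..<length ms] \<rparr>"

definition rename_rule :: "('x \<Rightarrow> 'x) \<Rightarrow> ('f, 'x, 'w) rule \<Rightarrow> ('f, 'x, 'w) rule" where
  "rename_rule \<pi> r = \<lparr> rhead = map (map_trm id \<pi>) (rhead r),
                        rbody = map (\<lambda>(V, ts). (V, map (map_trm id \<pi>) ts)) (rbody r) \<rparr>"

definition variant :: "('f, 'x, 'w) rule \<Rightarrow> ('f, 'x, 'w) rule \<Rightarrow> bool" where
  "variant r r' \<longleftrightarrow> (\<exists>\<pi>. bij \<pi> \<and> r' = rename_rule \<pi> r)"

definition covers ::
  "('l, 'f, 'u, 'w) mapping set \<Rightarrow> ('l, 'v) cq \<Rightarrow> ('f, 'v, 'u, 'w) unf_rule set \<Rightarrow> bool" where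
  "covers M q \<Pi> \<longleftrightarrow>
     (\<forall>ms \<sigma>. set ms \<subseteq> M \<longrightarrow> is_mgu q ms \<sigma> \<longrightarrow> (\<exists>r \<in> \<Pi>. variant r (gen_rule q ms \<sigma>)))"

text \<open>\<Pi> is the rule set of unf(q, M): a minimal (up to renaming) covering set.\<close>
definition is_unfolding ::
  "('l, 'f, 'u, 'w) mapping set \<Rightarrow> ('l, 'v) cq \<Rightarrow> ('f, 'v, 'u, 'w) unf_rule set \<Rightarrow> bool" where
  "is_unfolding M q \<Pi> \<longleftrightarrow> covers M q \<Pi> \<and> (\<forall>\<Pi>' \<subset> \<Pi>. \<not> covers M q \<Pi>')"

text \<open>Unifiability of two rule heads (rules are independent, so variables renamed apart).\<close>
definition heads_unifiable :: "('f, 'x, 'w) rule \<Rightarrow> ('f, 'x, 'w) rule \<Rightarrow> bool" where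
  "heads_unifiable r1 r2 \<longleftrightarrow>
     (\<exists>\<sigma>1 \<sigma>2 :: 'x \<Rightarrow> ('f, 'x) trm. map (subst \<sigma>1) (rhead r1) = map (subst \<sigma>2) (rhead r2))"

text \<open>Evaluation of the single-rule Datalog query (q_unf, {r}) over database D, where
  ext V D is the extension of view V on D. Variables range over database values.\<close>
definition eval_rule ::
  "('w \<Rightarrow> 'db \<Rightarrow> 'c list set) \<Rightarrow> 'db \<Rightarrow> ('f, 'x, 'w) rule \<Rightarrow> ('f, 'c) trm list set" where
  "eval_rule ext D r =
     {map (map_trm id val) (rhead r) | val.
        \<forall>(V, ts) \<in> set (rbody r). \<exists>tup \<in> ext V D. map (map_trm id val) ts = map Var tup}"

end

theory Submission
  imports Defs
begin

text \<open>A common answer of two rules is a common ground instance of their heads. Replacing every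
  database value in it by one and the same variable turns both valuations into substitutions
  that unify the heads.\<close>

lemma subst_Var_comp_map_trm:
  "subst (\<lambda>x. Var (e (val x))) t = map_trm id e (map_trm id val t)"
  by (induction t) auto

lemma common_instance_imp_unifiable:
  fixes val1 :: "'x \<Rightarrow> 'c" and val2 :: "'y \<Rightarrow> 'c" and z :: 'z
  assumes "map (map_trm id val1) ts1 = map (map_trm id val2) ts2"
  shows "\<exists>\<sigma>1 \<sigma>2 :: _ \<Rightarrow> ('f, 'z) trm. map (subst \<sigma>1) ts1 = map (subst \<sigma>2) ts2"
proof -
  define e :: "'c \<Rightarrow> 'z" where "e = (\<lambda>_. z)"
  have "map (subst (\<lambda>x. Var (e (val1 x)))) ts1 = map (map_trm id e) (map (map_trm id val1) ts1)"
    by (simp add: subst_Var_comp_map_trm)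
  also have "\<dots> = map (map_trm id e) (map (map_trm id val2) ts2)"
    using assms by (rule arg_cong)
  also have "\<dots> = map (subst (\<lambda>x. Var (e (val2 x)))) ts2"
    by (simp add: subst_Var_comp_map_trm)
  finally show ?thesis by blast
qed

lemma eval_rule_disjoint_if_not_heads_unifiable:
  assumes "\<not> heads_unifiable r1 r2"
  shows "eval_rule ext D r1 \<inter> eval_rule ext D r2 = {}"
proof (rule ccontr)
  assume "eval_rule ext D r1 \<inter> eval_rule ext D r2 \<noteq> {}"
  then obtain t where "t \<in> eval_rule ext D r1" and "t \<in> eval_rule ext D r2"
    by blast
  then obtain val1 val2 where
    "t = map (map_trm id val1) (rhead r1)" and "t = map (map_trm id val2) (rhead r2)"
    unfolding eval_rule_def mem_Collect_eq by metis
  then have "map (map_trm id val1) (rhead r1) = map (map_trm id val2) (rhead r2)"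
    by simp
  then have "heads_unifiable r1 r2"
    unfolding heads_unifiable_def by (rule common_instance_imp_unifiable)
  with assms show False ..
qed

theorem lemma6:
  fixes M :: "('l, 'f, 'u, 'w) mapping set"
    and q :: "('l, 'v) cq"
    and \<Pi> :: "('f, 'v, 'u, 'w) unf_rule set"
    and ext :: "'w \<Rightarrow> 'db \<Rightarrow> 'c list set"
  assumes "\<forall>m \<in> M. wf_mapping m"
    and "is_unfolding M q \<Pi>"
    and "r1 \<in> \<Pi>" and "r2 \<in> \<Pi>"
    and "\<not> heads_unifiable r1 r2"
  shows "\<forall>D. eval_rule ext D r1 \<inter> eval_rule ext D r2 = {}"
  using assms(5) by (simp add: eval_rule_disjoint_if_not_heads_unifiable)

end
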